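(* Let $\mu$ be in the relative interior of $\Delta$. If an updating rule respects the Blackwell order for $\mu$ and $\varphi^{\mu}(\mu)\neq\mu$, then there exists $x\neq\mu$ at which $\varphi^{\mu}$ has an expansive error.
   Context: Let $\Theta$ be a finite set of states, $|\Theta|=n\ge2$, and $\Delta=\Delta(\Theta)$ the simplex of beliefs. An experiment $\pi:\Theta\to\Delta(S)$ ($S$ finite) with prior $\mu$ induces the Bayesian distribution over posteriors $\rho_B$, a finitely supported distribution on $\Delta$ with mean $\mu$ (every such distribution arises from some experiment). Blackwell order: $\pi\succeq\pi'$ iff $\rho_B'$ is a mean-preserving contraction of $\rho_B$. An updating rule is given, for each prior $\mu$, by a distortion function $\varphi^{\mu}:\Delta\to\Delta$: when the Bayesian posterior is $x$, the decision maker holds belief $\varphi^{\mu}(x)$. For a compact action set $A$, continuous $u:A\times\Theta\to\mathbb{R}$, and consistent choice $a^*:\Delta\to A$ (i.e. $a^*(y)\in\arg\max_{a}\mathbb{E}_y u(a,\theta)$ for all $y$), let $W(x)=\mathbb{E}_x u(a^*(\varphi^{\mu}(x)),\theta)$. The rule respects the Blackwell order for $\mu$ if for all such $A,u,a^*$ and all $\pi\succeq\pi'$, $\mathbb{E}_{\rho_B}W\ge\mathbb{E}_{\rho_B'}W$. $\varphi^{\mu}$ has an expansive error at $x$ if $\varphi^{\mu}(x)$ does not lie on the closed line segment between $x$ and $\mu$. *)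

theory Defs
  imports "HOL-Analysis.Analysis" "HOL-Probability.Probability_Mass_Function"
begin

definition beliefs :: "(real^'n::finite) set" where
  "beliefs = {x. (\<forall>i. 0 \<le> x $ i) \<and> (\<Sum>i\<in>UNIV. x $ i) = 1}"

definition pmean :: "(real^'n::finite) pmf \<Rightarrow> real^'n" where
  "pmean \<rho> = (\<Sum>x\<in>set_pmf \<rho>. pmf \<rho> x *\<^sub>R x)"

text \<open>Distributions over posteriors induced by some experiment under prior mu:
  finitely supported distributions on the beliefs with mean mu.\<close>
definition posterior_dist :: "(real^'n::finite) \<Rightarrow> (real^'n) pmf \<Rightarrow> bool" where
  "posterior_dist \<mu> \<rho> \<longleftrightarrow> finite (set_pmf \<rho>) \<and> set_pmf \<rho> \<subseteq> beliefs \<and> pmean \<rho> = \<mu>"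

definition mp_contraction :: "(real^'n::finite) pmf \<Rightarrow> (real^'n) pmf \<Rightarrow> bool" where
  "mp_contraction \<rho>' \<rho> \<longleftrightarrow>
     (\<exists>K. (\<forall>y\<in>set_pmf \<rho>'. finite (set_pmf (K y)) \<and> set_pmf (K y) \<subseteq> beliefs \<and> pmean (K y) = y)
          \<and> \<rho> = bind_pmf \<rho>' K)"

definition eu :: "('b \<Rightarrow> 'n \<Rightarrow> real) \<Rightarrow> (real^'n::finite) \<Rightarrow> 'b \<Rightarrow> real" where
  "eu u y a = (\<Sum>\<theta>\<in>UNIV. y $ \<theta> * u a \<theta>)"

definition consistent_choice ::
  "'b set \<Rightarrow> ('b \<Rightarrow> 'n \<Rightarrow> real) \<Rightarrow> ((real^'n::finite) \<Rightarrow> 'b) \<Rightarrow> bool" where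
  "consistent_choice A u astar \<longleftrightarrow>
     (\<forall>y\<in>beliefs. astar y \<in> A \<and> (\<forall>a\<in>A. eu u y a \<le> eu u y (astar y)))"

definition Wval :: "((real^'n::finite) \<Rightarrow> real^'n) \<Rightarrow> ('b \<Rightarrow> 'n \<Rightarrow> real) \<Rightarrow> (real^'n \<Rightarrow> 'b)
     \<Rightarrow> real^'n \<Rightarrow> real" where
  "Wval \<phi> u astar x = eu u x (astar (\<phi> x))"

definition pexp :: "(real^'n::finite) pmf \<Rightarrow> (real^'n \<Rightarrow> real) \<Rightarrow> real" where
  "pexp \<rho> f = (\<Sum>x\<in>set_pmf \<rho>. pmf \<rho> x * f x)"

text \<open>Actions are taken WLOG as points of real^'n (payoff vectors).\<close>
definition respects_blackwell :: "(real^'n::finite) \<Rightarrow> (real^'n \<Rightarrow> real^'n) \<Rightarrow> bool" where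
  "respects_blackwell \<mu> \<phi> \<longleftrightarrow>
     (\<forall>(A :: (real^'n) set) (u :: real^'n \<Rightarrow> 'n \<Rightarrow> real) astar \<rho> \<rho>'.
        compact A \<and> (\<forall>\<theta>. continuous_on A (\<lambda>a. u a \<theta>)) \<and> consistent_choice A u astar
        \<and> posterior_dist \<mu> \<rho> \<and> posterior_dist \<mu> \<rho>' \<and> mp_contraction \<rho>' \<rho>
        \<longrightarrow> pexp \<rho> (Wval \<phi> u astar) \<ge> pexp \<rho>' (Wval \<phi> u astar))"

definition expansive_error :: "(real^'n::finite) \<Rightarrow> (real^'n \<Rightarrow> real^'n) \<Rightarrow> real^'n \<Rightarrow> bool" where
  "expansive_error \<mu> \<phi> x \<longleftrightarrow> \<phi> x \<notin> closed_segment x \<mu>"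

end

theory Submission
  imports Defs
begin

text \<open>Suppose no belief other than \<mu> suffers an expansive error, and let \<nu> = \<phi> \<mu> \<noteq> \<mu>.
  Take a bet a whose expected payoff is positive at \<mu> and negative at \<nu>, and offer the
  choice between a and the safe action 0. Since \<mu> is relatively interior, the line through
  \<nu> and \<mu> stays among the beliefs slightly beyond \<mu>. Near \<mu> on this line the distorted
  belief lies between the posterior and \<mu>, hence on the side where the bet pays, so the value
  W is the affine function x \<bullet> a there; at \<mu> itself the decision maker believes \<nu>, declines,
  and W \<mu> = 0 < \<mu> \<bullet> a. Spreading the posteriors \<mu> \<plusminus> e into \<mu> and \<mu> \<plusminus> 2e is a
  Blackwell improvement that moves half of the mass onto \<mu>, lowering the expected value
  from \<mu> \<bullet> a to \<mu> \<bullet> a / 2.\<close>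

definition coin_pmf :: "'a \<Rightarrow> 'a \<Rightarrow> 'a pmf" where
  "coin_pmf a b = map_pmf (\<lambda>c. if c then a else b) (bernoulli_pmf (1/2))"

lemma set_pmf_coin_pmf [simp]: "set_pmf (coin_pmf a b) = {a, b}"
  by (auto simp: coin_pmf_def)

lemma expectation_coin_pmf:
  fixes h :: "'a \<Rightarrow> 'b::{banach, second_countable_topology}"
  shows "measure_pmf.expectation (coin_pmf a b) h = (1/2) *\<^sub>R (h a + h b)"
  unfolding coin_pmf_def integral_map_pmf
  by (subst integral_measure_pmf[of UNIV]) (auto simp: UNIV_bool scaleR_add_right)

lemma expectation_bind_pmf_finite:
  fixes h :: "'b \<Rightarrow> 'c::{banach, second_countable_topology}"
  assumes "finite (set_pmf p)" "\<And>x. x \<in> set_pmf p \<Longrightarrow> finite (set_pmf (f x))"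
  shows "measure_pmf.expectation (p \<bind> f) h =
           measure_pmf.expectation p (\<lambda>x. measure_pmf.expectation (f x) h)"
  using assms by (simp add: pmf_expectation_bind[of "set_pmf p"] integral_measure_pmf[of "set_pmf p"])

lemma pexp_eq_expectation:
  "finite (set_pmf \<rho>) \<Longrightarrow> pexp \<rho> f = measure_pmf.expectation \<rho> f"
  unfolding pexp_def by (simp add: integral_measure_pmf[of "set_pmf \<rho>"])

lemma pmean_eq_expectation:
  "finite (set_pmf \<rho>) \<Longrightarrow> pmean \<rho> = measure_pmf.expectation \<rho> (\<lambda>x. x)"
  unfolding pmean_def by (simp add: integral_measure_pmf[of "set_pmf \<rho>"])

lemma pexp_bind_pmf:
  assumes "finite (set_pmf p)" "\<And>x. x \<in> set_pmf p \<Longrightarrow> finite (set_pmf (K x))"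
  shows "pexp (p \<bind> K) f = pexp p (\<lambda>x. pexp (K x) f)"
  using assms
  by (simp add: pexp_eq_expectation expectation_bind_pmf_finite AE_measure_pmf_iff integral_cong_AE)

lemma pexp_coin_pmf: "pexp (coin_pmf a b) f = (f a + f b) / 2"
  by (simp add: pexp_eq_expectation expectation_coin_pmf)

lemma pmean_coin_pmf: "pmean (coin_pmf a b) = (1/2) *\<^sub>R (a + b)"
  by (simp add: pmean_eq_expectation expectation_coin_pmf)

lemma
  assumes \<rho>': "posterior_dist \<mu> \<rho>'"
    and K: "\<And>y. y \<in> set_pmf \<rho>' \<Longrightarrow>
              finite (set_pmf (K y)) \<and> set_pmf (K y) \<subseteq> beliefs \<and> pmean (K y) = y"
  shows posterior_dist_bind: "posterior_dist \<mu> (bind_pmf \<rho>' K)"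
    and mp_contraction_bind: "mp_contraction \<rho>' (bind_pmf \<rho>' K)"
proof -
  have fin: "finite (set_pmf \<rho>')" using \<rho>' by (simp add: posterior_dist_def)
  have mean_K: "measure_pmf.expectation (K y) (\<lambda>x. x) = y" if "y \<in> set_pmf \<rho>'" for y
    using K[OF that] by (metis pmean_eq_expectation)
  have "pmean (bind_pmf \<rho>' K) =
          measure_pmf.expectation \<rho>' (\<lambda>y. measure_pmf.expectation (K y) (\<lambda>x. x))"
    using fin K by (simp add: pmean_eq_expectation expectation_bind_pmf_finite)
  also have "\<dots> = pmean \<rho>'"
    using fin by (simp add: pmean_eq_expectation integral_cong_AE AE_measure_pmf_iff mean_K)
  finally show "posterior_dist \<mu> (bind_pmf \<rho>' K)"
    using \<rho>' K by (auto simp: posterior_dist_def)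
  show "mp_contraction \<rho>' (bind_pmf \<rho>' K)"
    unfolding mp_contraction_def using K by blast
qed

lemma convex_beliefs: "convex beliefs"
proof (rule convexI)
  fix x y :: "real^'n" and u v :: real
  assume "x \<in> beliefs" "y \<in> beliefs" "0 \<le> u" "0 \<le> v" "u + v = 1"
  moreover have "(\<Sum>i\<in>UNIV. (u *\<^sub>R x + v *\<^sub>R y) $ i) = u * (\<Sum>i\<in>UNIV. x $ i) + v * (\<Sum>i\<in>UNIV. y $ i)"
    by (simp add: sum.distrib sum_distrib_left)
  ultimately show "u *\<^sub>R x + v *\<^sub>R y \<in> beliefs"
    by (simp add: beliefs_def)
qed

lemma rel_interior_line_extends:
  fixes S :: "'a::euclidean_space set"
  assumes "convex S" "\<mu> \<in> rel_interior S" "\<nu> \<in> S"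
  obtains c where "c > 0" "\<And>s. - c \<le> s \<Longrightarrow> s \<le> 1 \<Longrightarrow> \<mu> + s *\<^sub>R (\<nu> - \<mu>) \<in> S"
proof -
  have "\<nu> \<in> affine hull S"
    using assms(3) by (rule hull_inc)
  then obtain m where "m > 1" and far: "(1 - m) *\<^sub>R \<nu> + m *\<^sub>R \<mu> \<in> S"
    using convex_rel_interior_if2[OF assms(1,2)] by blast
  define c where "c = m - 1"
  have "\<mu> + s *\<^sub>R (\<nu> - \<mu>) \<in> S" if "- c \<le> s" "s \<le> 1" for s
  proof -
    define l where "l = (s + c) / (1 + c)"
    have l: "0 \<le> l" "l \<le> 1" using that \<open>m > 1\<close> by (auto simp: l_def c_def field_simps)
    have coeffs: "(1 - l) * (1 - m) + l = s" "(1 - l) * m = 1 - s"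
      using \<open>m > 1\<close> by (simp_all add: l_def c_def field_simps)
    have "(1 - l) *\<^sub>R ((1 - m) *\<^sub>R \<nu> + m *\<^sub>R \<mu>) + l *\<^sub>R \<nu>
            = ((1 - l) * (1 - m) + l) *\<^sub>R \<nu> + ((1 - l) * m) *\<^sub>R \<mu>"
      by (simp add: algebra_simps)
    also have "\<dots> = s *\<^sub>R \<nu> + (1 - s) *\<^sub>R \<mu>"
      using coeffs by simp
    also have "\<dots> = \<mu> + s *\<^sub>R (\<nu> - \<mu>)"
      by (simp add: algebra_simps)
    finally show ?thesis
      using l far assms(1,3) by (metis convex_alt)
  qed
  moreover have "c > 0" using \<open>m > 1\<close> by (simp add: c_def)
  ultimately show ?thesis using that by blast
qed

lemma inner_ones_belief: "y \<in> beliefs \<Longrightarrow> y \<bullet> (\<chi> i. 1) = 1"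
  unfolding beliefs_def inner_vec_def by simp

lemma beliefs_opposite_payoff:
  assumes "\<mu> \<in> beliefs" "\<nu> \<in> beliefs" "\<mu> \<noteq> \<nu>"
  obtains a :: "real^'n::finite" where "0 < \<mu> \<bullet> a" "\<nu> \<bullet> a = - (\<mu> \<bullet> a)"
proof
  define d where "d = \<mu> - \<nu>"
  \<comment> \<open>shifting by the all-ones vector moves every belief's payoff by the same
    constant, chosen here to centre the payoffs of \<mu> and \<nu> at 0\<close>
  define a where "a = d - ((d \<bullet> (\<mu> + \<nu>)) / 2) *\<^sub>R (\<chi> i. 1)"
  have mu_a: "\<mu> \<bullet> a = (d \<bullet> \<mu> - d \<bullet> \<nu>) / 2" and nu_a: "\<nu> \<bullet> a = (d \<bullet> \<nu> - d \<bullet> \<mu>) / 2"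
    using assms(1,2) by (simp_all add: a_def inner_diff_right inner_add_right inner_ones_belief inner_commute)
      (simp_all add: field_simps)
  have "\<mu> \<bullet> a = (d \<bullet> d) / 2" using mu_a by (simp add: d_def inner_diff_right)
  moreover have "0 < d \<bullet> d" using assms(3) by (simp add: d_def)
  ultimately show "0 < \<mu> \<bullet> a" by linarith
  show "\<nu> \<bullet> a = - (\<mu> \<bullet> a)" using mu_a nu_a by simp
qed

definition bet_choice :: "real^'n::finite \<Rightarrow> real^'n \<Rightarrow> real^'n" where
  "bet_choice a y = (if 0 \<le> y \<bullet> a then a else 0)"

lemma eu_payoff_vector: "eu (\<lambda>b \<theta>. b $ \<theta>) y b = y \<bullet> b"
  unfolding eu_def inner_vec_def by simp

lemma bet_decision_problem:
  shows "compact {a, 0}"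
    and "\<forall>\<theta>. continuous_on {a, 0} (\<lambda>b. b $ \<theta>)"
    and "consistent_choice {a, 0} (\<lambda>b \<theta>. b $ \<theta>) (bet_choice a)"
  by (auto simp: consistent_choice_def bet_choice_def eu_payoff_vector
           intro!: continuous_on_component continuous_on_id)

lemma Wval_bet_choice:
  "Wval \<phi> (\<lambda>b \<theta>. b $ \<theta>) (bet_choice a) x = (if 0 \<le> \<phi> x \<bullet> a then x \<bullet> a else 0)"
  by (simp add: Wval_def bet_choice_def eu_payoff_vector)

lemma respects_blackwellD:
  fixes A :: "(real^'n::finite) set" and u :: "real^'n \<Rightarrow> 'n \<Rightarrow> real"
  assumes "respects_blackwell \<mu> \<phi>"
    and "compact A" "\<forall>\<theta>. continuous_on A (\<lambda>a. u a \<theta>)" "consistent_choice A u astar"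
    and "posterior_dist \<mu> \<rho>" "posterior_dist \<mu> \<rho>'" "mp_contraction \<rho>' \<rho>"
  shows "pexp \<rho>' (Wval \<phi> u astar) \<le> pexp \<rho> (Wval \<phi> u astar)"
  by (rule assms(1)[unfolded respects_blackwell_def, rule_format]) (use assms(2-7) in simp)

lemma respects_blackwell_spread:
  fixes A :: "(real^'n::finite) set" and u :: "real^'n \<Rightarrow> 'n \<Rightarrow> real"
  assumes "respects_blackwell \<mu> \<phi>" "\<mu> \<in> beliefs"
    and "\<mu> + 2 *\<^sub>R e \<in> beliefs" "\<mu> - 2 *\<^sub>R e \<in> beliefs"
    and "compact A" "\<forall>\<theta>. continuous_on A (\<lambda>a. u a \<theta>)" "consistent_choice A u astar"
  defines "W \<equiv> Wval \<phi> u astar"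
  shows "(W (\<mu> + e) + W (\<mu> - e)) / 2
           \<le> ((W \<mu> + W (\<mu> + 2 *\<^sub>R e)) / 2 + (W \<mu> + W (\<mu> - 2 *\<^sub>R e)) / 2) / 2"
proof -
  define \<rho>' where "\<rho>' = coin_pmf (\<mu> + e) (\<mu> - e)"
  define K where "K y = coin_pmf \<mu> (2 *\<^sub>R y - \<mu>)" for y
  have mid: "(1/2) *\<^sub>R \<mu> + (1/2) *\<^sub>R y \<in> beliefs" if "y \<in> beliefs" for y
    using convexD[OF convex_beliefs assms(2) that] by simp
  have "\<mu> + e = (1/2) *\<^sub>R \<mu> + (1/2) *\<^sub>R (\<mu> + 2 *\<^sub>R e)"
    and "\<mu> - e = (1/2) *\<^sub>R \<mu> + (1/2) *\<^sub>R (\<mu> - 2 *\<^sub>R e)"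
    by (simp_all add: vec_eq_iff field_simps)
  then have "\<mu> + e \<in> beliefs" "\<mu> - e \<in> beliefs"
    using mid[OF assms(3)] mid[OF assms(4)] by simp_all
  then have post': "posterior_dist \<mu> \<rho>'"
    by (simp add: posterior_dist_def \<rho>'_def pmean_coin_pmf vec_eq_iff)
  have reflect: "2 *\<^sub>R (\<mu> + e) - \<mu> = \<mu> + 2 *\<^sub>R e" "2 *\<^sub>R (\<mu> - e) - \<mu> = \<mu> - 2 *\<^sub>R e"
    by (simp_all add: vec_eq_iff)
  have K: "finite (set_pmf (K y)) \<and> set_pmf (K y) \<subseteq> beliefs \<and> pmean (K y) = y"
    if "y \<in> set_pmf \<rho>'" for y
  proof -
    have "y = \<mu> + e \<or> y = \<mu> - e"
      using that by (simp add: \<rho>'_def)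
    then have "2 *\<^sub>R y - \<mu> \<in> beliefs"
      by (elim disjE) (simp_all only: reflect assms(3,4))
    then have "set_pmf (K y) \<subseteq> beliefs"
      using assms(2) by (simp add: K_def)
    moreover have "pmean (K y) = y"
      by (simp add: K_def pmean_coin_pmf vec_eq_iff)
    ultimately show ?thesis by (simp add: K_def)
  qed
  have "pexp \<rho>' W \<le> pexp (\<rho>' \<bind> K) W"
    unfolding W_def
    by (rule respects_blackwellD[OF assms(1,5-7) posterior_dist_bind[OF post' K] post'
          mp_contraction_bind[OF post' K]])
  moreover have "pexp \<rho>' W = (W (\<mu> + e) + W (\<mu> - e)) / 2"
    by (simp only: \<rho>'_def pexp_coin_pmf)
  moreover have "pexp (\<rho>' \<bind> K) W = pexp \<rho>' (\<lambda>y. pexp (K y) W)"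
    by (simp add: pexp_bind_pmf \<rho>'_def K_def)
  moreover have "\<dots> = ((W \<mu> + W (\<mu> + 2 *\<^sub>R e)) / 2 + (W \<mu> + W (\<mu> - 2 *\<^sub>R e)) / 2) / 2"
    by (simp only: \<rho>'_def K_def pexp_coin_pmf reflect)
  ultimately show ?thesis
    by (simp only:)
qed

lemma Wval_bet_choice_within_segment:
  assumes "\<phi> x \<in> closed_segment x \<mu>" "0 < x \<bullet> a" "0 < \<mu> \<bullet> a"
  shows "Wval \<phi> (\<lambda>b \<theta>. b $ \<theta>) (bet_choice a) x = x \<bullet> a"
proof -
  have "closed_segment x \<mu> \<subseteq> {y. 0 < a \<bullet> y}"
    using assms(2,3) by (intro closed_segment_subset convex_halfspace_gt) (auto simp: inner_commute)
  then have "0 < \<phi> x \<bullet> a"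
    using assms(1) by (auto simp: inner_commute)
  then show ?thesis
    by (simp add: Wval_bet_choice)
qed

lemma Wval_bet_choice_on_update_line:
  assumes "\<phi> (\<mu> + r *\<^sub>R (\<phi> \<mu> - \<mu>)) \<in> closed_segment (\<mu> + r *\<^sub>R (\<phi> \<mu> - \<mu>)) \<mu>"
    and "r < 1/2" "0 < \<mu> \<bullet> a" "\<phi> \<mu> \<bullet> a = - (\<mu> \<bullet> a)"
  shows "Wval \<phi> (\<lambda>b \<theta>. b $ \<theta>) (bet_choice a) (\<mu> + r *\<^sub>R (\<phi> \<mu> - \<mu>)) = (1 - 2 * r) * (\<mu> \<bullet> a)"
proof -
  have "(\<mu> + r *\<^sub>R (\<phi> \<mu> - \<mu>)) \<bullet> a = (1 - 2 * r) * (\<mu> \<bullet> a)"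
    using assms(4) by (simp add: inner_add_left inner_diff_left algebra_simps)
  moreover have "0 < (1 - 2 * r) * (\<mu> \<bullet> a)"
    using assms(2,3) by simp
  ultimately show ?thesis
    using assms(1,3) by (simp add: Wval_bet_choice_within_segment)
qed

lemma respects_blackwell_no_downward_jump:
  fixes A :: "(real^'n::finite) set" and u :: "real^'n \<Rightarrow> 'n \<Rightarrow> real"
  assumes "respects_blackwell \<mu> \<phi>" "\<mu> \<in> beliefs"
    and "\<mu> + 2 *\<^sub>R e \<in> beliefs" "\<mu> - 2 *\<^sub>R e \<in> beliefs"
    and "compact A" "\<forall>\<theta>. continuous_on A (\<lambda>a. u a \<theta>)" "consistent_choice A u astar"
    and affine: "\<And>s. s \<in> {-2, -1, 1, 2} \<Longrightarrow> Wval \<phi> u astar (\<mu> + s *\<^sub>R e) = \<alpha> + \<beta> * s"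
  shows "\<alpha> \<le> Wval \<phi> u astar \<mu>"
  using respects_blackwell_spread[OF assms(1-7)] affine[of 1] affine[of "-1"] affine[of 2] affine[of "-2"]
  by (simp add: field_simps)

theorem lemma2:
  fixes \<mu> :: "real^'n::finite" and \<phi> :: "real^'n \<Rightarrow> real^'n"
  assumes "CARD('n) \<ge> 2"
    and "\<mu> \<in> rel_interior beliefs"
    and "\<forall>x\<in>beliefs. \<phi> x \<in> beliefs"
    and "respects_blackwell \<mu> \<phi>"
    and "\<phi> \<mu> \<noteq> \<mu>"
  shows "\<exists>x\<in>beliefs. x \<noteq> \<mu> \<and> expansive_error \<mu> \<phi> x"
proof (rule ccontr)
  assume "\<not> ?thesis"
  then have no_expansion: "\<phi> x \<in> closed_segment x \<mu>" if "x \<in> beliefs" "x \<noteq> \<mu>" for x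
    using that by (auto simp: expansive_error_def)
  have \<mu>: "\<mu> \<in> beliefs" and \<phi>\<mu>: "\<phi> \<mu> \<in> beliefs"
    using assms(2,3) rel_interior_subset by blast+
  obtain c where "c > 0" and line: "\<And>s. - c \<le> s \<Longrightarrow> s \<le> 1 \<Longrightarrow> \<mu> + s *\<^sub>R (\<phi> \<mu> - \<mu>) \<in> beliefs"
    using rel_interior_line_extends[OF convex_beliefs assms(2) \<phi>\<mu>] by blast
  obtain a where a: "0 < \<mu> \<bullet> a" "\<phi> \<mu> \<bullet> a = - (\<mu> \<bullet> a)"
    using beliefs_opposite_payoff[OF \<mu> \<phi>\<mu> assms(5)[symmetric]] by blast
  define t where "t = min c (1/4) / 2"
  define e where "e = t *\<^sub>R (\<phi> \<mu> - \<mu>)"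
  have on_line: "\<mu> + s *\<^sub>R e \<in> beliefs"
    "Wval \<phi> (\<lambda>b \<theta>. b $ \<theta>) (bet_choice a) (\<mu> + s *\<^sub>R e) = \<mu> \<bullet> a + (- 2 * t * (\<mu> \<bullet> a)) * s"
    if "s \<in> {-2, -1, 1, 2}" for s
  proof -
    have "\<bar>s * t\<bar> \<le> min c (1/4)" "s * t \<noteq> 0"
      using that \<open>c > 0\<close> by (auto simp: t_def abs_mult)
    then have x: "\<mu> + (s * t) *\<^sub>R (\<phi> \<mu> - \<mu>) \<in> beliefs" "\<mu> + (s * t) *\<^sub>R (\<phi> \<mu> - \<mu>) \<noteq> \<mu>"
      and "s * t < 1/2"
      using line[of "s * t"] assms(5) by (auto simp: abs_le_iff)
    then show "\<mu> + s *\<^sub>R e \<in> beliefs"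
      "Wval \<phi> (\<lambda>b \<theta>. b $ \<theta>) (bet_choice a) (\<mu> + s *\<^sub>R e) = \<mu> \<bullet> a + (- 2 * t * (\<mu> \<bullet> a)) * s"
      using Wval_bet_choice_on_update_line[OF no_expansion[OF x] \<open>s * t < 1/2\<close> a]
      by (simp_all add: e_def algebra_simps)
  qed
  have "\<mu> \<bullet> a \<le> Wval \<phi> (\<lambda>b \<theta>. b $ \<theta>) (bet_choice a) \<mu>"
    by (rule respects_blackwell_no_downward_jump[OF assms(4) \<mu> _ _ bet_decision_problem on_line(2)])
      (use on_line(1)[of 2] on_line(1)[of "- 2"] in simp_all)
  moreover have "Wval \<phi> (\<lambda>b \<theta>. b $ \<theta>) (bet_choice a) \<mu> = 0"
    using a by (simp add: Wval_bet_choice)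
  ultimately show False
    using a(1) by simp
qed

end
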